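(* Let $S$ be a bounded operator on $C([0,\omega_1])$ whose final column vanishes, i.e. $S_{\alpha,\omega_1}=0$ for all $\alpha\in[0,\omega_1]$. Then for each pair $\zeta,\eta$ of countable ordinals there is a countable ordinal $\xi\ge\zeta$ such that $P_\eta S(I-P_\xi)=0$.
   Context: $\omega_1$ is the first uncountable ordinal; $[0,\omega_1]$ has the order topology and $C([0,\omega_1])$ is the Banach space of continuous scalar-valued functions with sup norm. The matrix of an operator $S$ on $C([0,\omega_1])$ is the unique family of scalars $S_{\alpha,\beta}$ with $\sum_\beta|S_{\alpha,\beta}|<\infty$ and $Sf(\alpha)=\sum_{\beta\in[0,\omega_1]}S_{\alpha,\beta}f(\beta)$ for all $f$, $\alpha$. For a countable ordinal $\sigma$, $P_\sigma f=f\cdot\mathbf{1}_{[0,\sigma]}$; $I$ is the identity operator. *)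

theory Defs
  imports "HOL-Analysis.Analysis"
begin

text \<open>The compact space [0,omega_1] is modelled by a type 'b carrying a well-order with a
  top element (omega_1) and its order topology, such that the elements strictly below top
  form an uncountable set all of whose proper initial segments are countable.
  These conditions characterise [0,omega_1] up to order isomorphism.\<close>

definition is_omega1_plus_one :: "'b::{wellorder, order_top} itself \<Rightarrow> bool" where
  "is_omega1_plus_one _ \<longleftrightarrow>
     uncountable {x::'b. x < top} \<and> (\<forall>a::'b. a < top \<longrightarrow> countable {x. x < a})"

definition Cfun :: "('b::topological_space \<Rightarrow> 'k::real_normed_field) set" where
  "Cfun = {f. continuous_on UNIV f}"

definition bounded_operator ::
  "(('b::topological_space \<Rightarrow> 'k::real_normed_field) \<Rightarrow> ('b \<Rightarrow> 'k)) \<Rightarrow> bool" where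
  "bounded_operator S \<longleftrightarrow>
     (\<forall>f\<in>Cfun. S f \<in> Cfun) \<and>
     (\<forall>f\<in>Cfun. \<forall>g\<in>Cfun. S (\<lambda>x. f x + g x) = (\<lambda>x. S f x + S g x)) \<and>
     (\<forall>f\<in>Cfun. \<forall>c. S (\<lambda>x. c * f x) = (\<lambda>x. c * S f x)) \<and>
     (\<exists>K. \<forall>f\<in>Cfun. \<forall>B. (\<forall>x. norm (f x) \<le> B) \<longrightarrow> (\<forall>a. norm (S f a) \<le> K * B))"

definition is_matrix_of ::
  "(('b::topological_space \<Rightarrow> 'k::{real_normed_field,banach}) \<Rightarrow> ('b \<Rightarrow> 'k)) \<Rightarrow> ('b \<Rightarrow> 'b \<Rightarrow> 'k) \<Rightarrow> bool" where
  "is_matrix_of S M \<longleftrightarrow>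
     (\<forall>a. (\<lambda>b. norm (M a b)) summable_on UNIV) \<and>
     (\<forall>f\<in>Cfun. \<forall>a. S f a = (\<Sum>\<^sub>\<infinity>b. M a b * f b))"

definition Pproj :: "'b::linorder \<Rightarrow> ('b \<Rightarrow> 'k::real_normed_field) \<Rightarrow> ('b \<Rightarrow> 'k)" where
  "Pproj \<sigma> f = (\<lambda>x. if x \<le> \<sigma> then f x else 0)"

end

theory Submission
  imports Defs
begin

text \<open>Each row of the matrix is absolutely summable, so it has countable support. The rows
  indexed by the countable set [0,\<eta>] therefore have their supports, which avoid omega_1 by
  hypothesis, inside a countable subset of [0,omega_1); together with \<zeta> this set is bounded
  by some countable \<xi>, as omega_1 has uncountable cofinality. Then for \<alpha> \<le> \<eta> the matrix row
  vanishes wherever f - P_\<xi> f does not, so (S(I - P_\<xi>)f)(\<alpha>) = 0.\<close>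

lemma open_atMost_if_less:
  fixes \<xi> y :: "'a::{wellorder, order_topology}"
  assumes "\<xi> < y"
  shows "open {..\<xi>}"
proof -
  define s where "s = (LEAST y. \<xi> < y)"
  have "\<xi> < s"
    unfolding s_def using assms by (rule LeastI)
  moreover have "s \<le> x" if "\<xi> < x" for x
    unfolding s_def using that by (rule Least_le)
  ultimately have "{..\<xi>} = {..<s}"
    by (auto intro: le_less_trans) (meson leD leI)
  then show ?thesis
    by simp
qed

lemma Pproj_in_Cfun:
  fixes f :: "'b::{wellorder, order_top, order_topology} \<Rightarrow> 'k::real_normed_field"
  assumes "f \<in> Cfun" and "\<xi> < top"
  shows "Pproj \<xi> f \<in> Cfun"
proof -
  have "open {..\<xi>}"
    using assms(2) by (rule open_atMost_if_less)
  moreover have "continuous_on UNIV f"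
    using assms(1) by (simp add: Cfun_def)
  ultimately have "continuous_on ({..\<xi>} \<union> {\<xi><..}) (\<lambda>x. if x \<in> {..\<xi>} then f x else 0)"
    by (intro continuous_on_cases_local_open) (auto intro: continuous_on_subset open_subset)
  moreover have "{..\<xi>} \<union> {\<xi><..} = UNIV"
    by auto
  ultimately show ?thesis
    by (simp add: Cfun_def Pproj_def)
qed

lemma countable_atMost_omega1:
  fixes \<eta> :: "'b::{wellorder, order_top}"
  assumes "is_omega1_plus_one TYPE('b)" and "\<eta> < top"
  shows "countable {..\<eta>}"
proof -
  have "{..\<eta>} = insert \<eta> {x. x < \<eta>}"
    by auto
  then show ?thesis
    using assms by (simp add: is_omega1_plus_one_def)
qed

lemma countable_bounded_below_omega1:
  fixes C :: "'b::{wellorder, order_top} set"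
  assumes "is_omega1_plus_one TYPE('b)" and "countable C" and "\<forall>c\<in>C. c < top"
  obtains u where "u < top" and "\<forall>c\<in>C. c \<le> u"
proof -
  have "\<exists>u<top. \<forall>c\<in>C. c \<le> u"
  proof (rule ccontr)
    assume unbounded: "\<not> (\<exists>u<top. \<forall>c\<in>C. c \<le> u)"
    have "{x. x < top} \<subseteq> (\<Union>c\<in>C. {x. x < c})"
      using unbounded by (auto simp: not_le)
    moreover have "countable (\<Union>c\<in>C. {x. x < c})"
      using assms by (intro countable_UN) (auto simp: is_omega1_plus_one_def)
    ultimately show False
      using assms(1) countable_subset by (auto simp: is_omega1_plus_one_def)
  qed
  then show ?thesis
    using that by blast
qed

lemma countable_row_support:
  assumes "is_matrix_of S M"
  shows "countable {b. M a b \<noteq> 0}"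
  using assms abs_summable_countable[of "M a" UNIV] by (simp add: is_matrix_of_def)

lemma matrix_apply_eq_0:
  assumes "is_matrix_of S M" and "g \<in> Cfun" and "\<forall>b. M a b \<noteq> 0 \<longrightarrow> g b = 0"
  shows "S g a = 0"
proof -
  have "S g a = (\<Sum>\<^sub>\<infinity>b. M a b * g b)"
    using assms(1,2) by (simp add: is_matrix_of_def)
  also have "\<dots> = 0"
    using assms(3) by (metis (mono_tags) infsum_0 mult_eq_0_iff)
  finally show ?thesis .
qed

theorem lemma4p4:
  fixes S :: "('b::{wellorder, order_top, order_topology} \<Rightarrow> 'k::{real_normed_field,banach}) \<Rightarrow> ('b \<Rightarrow> 'k)"
  assumes "is_omega1_plus_one TYPE('b)"
    and "bounded_operator S"
    and "is_matrix_of S M"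
    and "\<forall>a. M a top = 0"
  shows "\<forall>\<zeta> \<eta>. \<zeta> < top \<and> \<eta> < top \<longrightarrow>
           (\<exists>\<xi>. \<zeta> \<le> \<xi> \<and> \<xi> < top \<and>
              (\<forall>f\<in>Cfun. Pproj \<eta> (S (\<lambda>x. f x - Pproj \<xi> f x)) = (\<lambda>x. 0)))"
proof (intro allI impI)
  fix \<zeta> \<eta> :: 'b
  assume "\<zeta> < top \<and> \<eta> < top"
  define C where "C = insert \<zeta> (\<Union>a\<in>{..\<eta>}. {b. M a b \<noteq> 0})"
  have "countable C"
    unfolding C_def using countable_atMost_omega1[OF assms(1)] countable_row_support[OF assms(3)]
      \<open>\<zeta> < top \<and> \<eta> < top\<close> by auto
  moreover have "\<forall>c\<in>C. c < top"
    unfolding C_def using \<open>\<zeta> < top \<and> \<eta> < top\<close> assms(4) by (auto simp: less_le)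
  ultimately obtain \<xi> where \<xi>: "\<xi> < top" "\<forall>c\<in>C. c \<le> \<xi>"
    using countable_bounded_below_omega1[OF assms(1)] by blast
  have "Pproj \<eta> (S (\<lambda>x. f x - Pproj \<xi> f x)) a = 0" if "f \<in> Cfun" for f a
  proof -
    have "(\<lambda>x. f x - Pproj \<xi> f x) \<in> Cfun"
      using that Pproj_in_Cfun[OF that \<xi>(1)] by (auto simp: Cfun_def intro: continuous_intros)
    moreover have "\<forall>b. M a b \<noteq> 0 \<longrightarrow> f b - Pproj \<xi> f b = 0" if "a \<le> \<eta>"
      using \<xi>(2) that by (auto simp: C_def Pproj_def)
    ultimately show ?thesis
      using matrix_apply_eq_0[OF assms(3)] by (auto simp: Pproj_def)
  qed
  then show "\<exists>\<xi>. \<zeta> \<le> \<xi> \<and> \<xi> < top \<and>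
              (\<forall>f\<in>Cfun. Pproj \<eta> (S (\<lambda>x. f x - Pproj \<xi> f x)) = (\<lambda>x. 0))"
    using \<xi> by (auto simp: C_def)
qed

end
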